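(* Let $r$ be a request whose underlying undirected graph of $G_r$ is a tree, and let $(x_r,\vec y_r,\vec z_r,\vec a_r)$ be a feasible solution of the LP relaxation of the multi-commodity flow formulation. Then the solution can be decomposed into a finite family $\mathcal D_r=\{(f^k_r,m^k_r)\}_k$ with weights $f^k_r>0$ and valid mappings $m^k_r\in\mathcal M_r$ such that (i) $x_r=\sum_kf^k_r$ and (ii) $a^{x,y}_r\ge\sum_kf^k_rA(m^k_r,x,y)$ for every resource $(x,y)\in R_S$.
   Context: Substrate: directed graph $G_S=(V_S,E_S)$, node types $\mathcal T$, $V_S^\tau\subseteq V_S$, node resources $R^V_S=\{(\tau,u):u\in V_S^\tau\}$, resources $R_S=R^V_S\cup E_S$, capacities $d_S(x,y)>0$. Request $r$: directed graph $G_r=(V_r,E_r)$, types $\tau_r$, demands $d_r(i),d_r(i,j)\ge0$, allowed node sets $V_S^{r,i}\subseteq V_S^{\tau_r(i)}$, allowed edge sets $E_S^{r,i,j}\subseteq E_S$. A valid mapping $m_r=(m^V_r,m^E_r)$: $m^V_r(i)\in V_S^{r,i}$; $m^E_r(i,j)$ the edge set of a directed path from $m^V_r(i)$ to $m^V_r(j)$ in $E_S^{r,i,j}$ (empty iff endpoints coincide); $\mathcal M_r$ the set of valid mappings; allocations $A(m_r,\tau,u)=\sum_{i:\tau_r(i)=\tau,m^V_r(i)=u}d_r(i)$, $A(m_r,u,v)=\sum_{(i,j):(u,v)\in m^E_r(i,j)}d_r(i,j)$. LP relaxation of the MCF formulation: variables $x_r\in[0,1]$, $y^u_{r,i}\in[0,1]$,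 $z^{u,v}_{r,i,j}\in[0,1]$, $a^{x,y}_r\ge 0$, constraints $\sum_{u\in V_S^{r,i}}y^u_{r,i}=x_r$ for all $i$; $y^u_{r,i}=0$ for $u\notin V_S^{r,i}$; $\sum_{(u,v)\in E_S}z^{u,v}_{r,i,j}-\sum_{(v,u)\in E_S}z^{v,u}_{r,i,j}=y^u_{r,i}-y^u_{r,j}$ for all $(i,j)\in E_r,u\in V_S$; $z^{u,v}_{r,i,j}=0$ for $(u,v)\notin E_S^{r,i,j}$; $a^{u,v}_r=\sum_{(i,j)}d_r(i,j)z^{u,v}_{r,i,j}$; $a^{\tau,u}_r=\sum_{i:\tau_r(i)=\tau}d_r(i)y^u_{r,i}$; $\sum_ra^{x,y}_r\le d_S(x,y)$. *)

theory Defs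
  imports Complex_Main
begin

text \<open>Underlying undirected graph of a directed graph (V,E) is a tree:
  nonempty, connected (in the symmetric closure), and acyclic, where acyclicity of
  the underlying undirected multigraph is expressed as: every edge is a bridge, i.e.
  after deleting the edge its endpoints are no longer connected (this also rules out
  self-loops and pairs of antiparallel edges, which form cycles in the underlying
  undirected multigraph).\<close>
definition undirected_tree :: "'n set \<Rightarrow> ('n \<times> 'n) set \<Rightarrow> bool" where
  "undirected_tree V E \<longleftrightarrow>
     finite V \<and> V \<noteq> {} \<and> E \<subseteq> V \<times> V \<and>
     (\<forall>i\<in>V. \<forall>j\<in>V. (i, j) \<in> (E \<union> E\<inverse>)\<^sup>*) \<and>
     (\<forall>(i,j)\<in>E. (i, j) \<notin> ((E - {(i,j)}) \<union> (E - {(i,j)})\<inverse>)\<^sup>*)"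

definition is_path_edges :: "('v \<times> 'v) set \<Rightarrow> 'v \<Rightarrow> 'v \<Rightarrow> ('v \<times> 'v) set \<Rightarrow> bool" where
  "is_path_edges F u v P \<longleftrightarrow>
     (\<exists>p. p \<noteq> [] \<and> distinct p \<and> hd p = u \<and> last p = v \<and>
          set (zip p (tl p)) \<subseteq> F \<and> P = set (zip p (tl p)))"

definition valid_mapping ::
  "'n set \<Rightarrow> ('n \<times> 'n) set \<Rightarrow> ('n \<Rightarrow> 'v set) \<Rightarrow> ('n \<times> 'n \<Rightarrow> ('v \<times> 'v) set)
   \<Rightarrow> ('n \<Rightarrow> 'v) \<times> ('n \<times> 'n \<Rightarrow> ('v \<times> 'v) set) \<Rightarrow> bool" where
  "valid_mapping Vr Er Vallow Eallow m \<longleftrightarrow>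
     (\<forall>i\<in>Vr. fst m i \<in> Vallow i) \<and>
     (\<forall>(i,j)\<in>Er. is_path_edges (Eallow (i,j)) (fst m i) (fst m j) (snd m (i,j)))"

definition alloc_node ::
  "'n set \<Rightarrow> ('n \<Rightarrow> 't) \<Rightarrow> ('n \<Rightarrow> real)
   \<Rightarrow> ('n \<Rightarrow> 'v) \<times> ('n \<times> 'n \<Rightarrow> ('v \<times> 'v) set) \<Rightarrow> 't \<Rightarrow> 'v \<Rightarrow> real" where
  "alloc_node Vr tr dV m t u = (\<Sum>i\<in>{i\<in>Vr. tr i = t \<and> fst m i = u}. dV i)"

definition alloc_edge ::
  "('n \<times> 'n) set \<Rightarrow> ('n \<times> 'n \<Rightarrow> real)
   \<Rightarrow> ('n \<Rightarrow> 'v) \<times> ('n \<times> 'n \<Rightarrow> ('v \<times> 'v) set) \<Rightarrow> 'v \<times> 'v \<Rightarrow> real" where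
  "alloc_edge Er dE m e = (\<Sum>ij\<in>{ij\<in>Er. e \<in> snd m ij}. dE ij)"

text \<open>Feasibility of (x, y, z, a) for the per-request constraints of the LP relaxation
  of the MCF formulation (the coupling capacity constraints sum_r a_r \<le> d_S are not
  needed).\<close>
definition mcf_lp_feasible ::
  "'v set \<Rightarrow> ('v \<times> 'v) set \<Rightarrow> 't set \<Rightarrow> ('t \<Rightarrow> 'v set)
   \<Rightarrow> 'n set \<Rightarrow> ('n \<times> 'n) set \<Rightarrow> ('n \<Rightarrow> 't) \<Rightarrow> ('n \<Rightarrow> real) \<Rightarrow> ('n \<times> 'n \<Rightarrow> real)
   \<Rightarrow> ('n \<Rightarrow> 'v set) \<Rightarrow> ('n \<times> 'n \<Rightarrow> ('v \<times> 'v) set)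
   \<Rightarrow> real \<Rightarrow> ('n \<Rightarrow> 'v \<Rightarrow> real) \<Rightarrow> ('n \<times> 'n \<Rightarrow> 'v \<times> 'v \<Rightarrow> real)
   \<Rightarrow> ('t \<Rightarrow> 'v \<Rightarrow> real) \<Rightarrow> ('v \<times> 'v \<Rightarrow> real) \<Rightarrow> bool" where
  "mcf_lp_feasible VS ES T VSt Vr Er tr dV dE Vallow Eallow x y z aN aE \<longleftrightarrow>
     0 \<le> x \<and> x \<le> 1 \<and>
     (\<forall>i\<in>Vr. \<forall>u\<in>VS. 0 \<le> y i u \<and> y i u \<le> 1) \<and>
     (\<forall>ij\<in>Er. \<forall>e\<in>ES. 0 \<le> z ij e \<and> z ij e \<le> 1) \<and>
     (\<forall>t\<in>T. \<forall>u\<in>VSt t. 0 \<le> aN t u) \<and>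
     (\<forall>e\<in>ES. 0 \<le> aE e) \<and>
     (\<forall>i\<in>Vr. (\<Sum>u\<in>Vallow i. y i u) = x) \<and>
     (\<forall>i\<in>Vr. \<forall>u\<in>VS - Vallow i. y i u = 0) \<and>
     (\<forall>(i,j)\<in>Er. \<forall>u\<in>VS.
        (\<Sum>e\<in>{e\<in>ES. fst e = u}. z (i,j) e) - (\<Sum>e\<in>{e\<in>ES. snd e = u}. z (i,j) e)
          = y i u - y j u) \<and>
     (\<forall>ij\<in>Er. \<forall>e\<in>ES - Eallow ij. z ij e = 0) \<and>
     (\<forall>e\<in>ES. aE e = (\<Sum>ij\<in>Er. dE ij * z ij e)) \<and>
     (\<forall>t\<in>T. \<forall>u\<in>VSt t. aN t u = (\<Sum>i\<in>{i\<in>Vr. tr i = t}. dV i * y i u))"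

end

theory Submission
  imports Defs "HOL-Library.Transitive_Closure_Table"
begin

text \<open>As long as x > 0, flow conservation lets every node choice u for i with y i u > 0 be
  extended along positive-flow substrate paths to a node choice v with y j v > 0 for each tree
  neighbour j, and conversely. Because G_r is a tree, these local extensions glue together to a
  valid mapping all of whose variables are positive. Subtracting it, weighted by its bottleneck
  value, preserves the LP constraints with x decreased and zeroes at least one variable, so
  induction on the number of nonzero variables yields the decomposition; the subtracted weights
  are dominated by y and z and hence their allocations by a.\<close>

lemma rtrancl_path_last_zip:
  "rtrancl_path r x xs y \<Longrightarrow> last (x # xs) = y \<and> set (zip (x # xs) xs) \<subseteq> {(a, b). r a b}"
  by (induction rule: rtrancl_path.induct) auto

lemma rtrancl_imp_is_path_edges:
  assumes "(u, w) \<in> F\<^sup>*"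
  shows "\<exists>P. is_path_edges F u w P"
proof -
  have "(\<lambda>a b. (a, b) \<in> F)\<^sup>*\<^sup>* u w"
    using assms by (simp add: rtrancl_def)
  then obtain xs where "rtrancl_path (\<lambda>a b. (a, b) \<in> F) u xs w"
    using rtranclp_eq_rtrancl_path by metis
  then obtain xs' where p: "rtrancl_path (\<lambda>a b. (a, b) \<in> F) u xs' w" "distinct (u # xs')"
    using rtrancl_path_distinct by metis
  from rtrancl_path_last_zip[OF p(1)] p(2) show ?thesis
    unfolding is_path_edges_def by (intro exI[of _ "set (zip (u # xs') xs')"] exI[of _ "u # xs'"]) auto
qed

lemma is_path_edges_mono: "is_path_edges F u v P \<Longrightarrow> F \<subseteq> G \<Longrightarrow> is_path_edges G u v P"
  unfolding is_path_edges_def by blast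

lemma is_path_edges_subset: "is_path_edges F u v P \<Longrightarrow> P \<subseteq> F"
  unfolding is_path_edges_def by auto

lemma is_path_edges_finite: "is_path_edges F u v P \<Longrightarrow> finite P"
  unfolding is_path_edges_def by auto

definition net_outflow :: "('v \<times> 'v) set \<Rightarrow> ('v \<times> 'v \<Rightarrow> real) \<Rightarrow> 'v \<Rightarrow> real" where
  "net_outflow ES g u = (\<Sum>e\<in>{e\<in>ES. fst e = u}. g e) - (\<Sum>e\<in>{e\<in>ES. snd e = u}. g e)"

lemma net_outflow_diff:
  "net_outflow ES (\<lambda>e. g e - h e) u = net_outflow ES g u - net_outflow ES h u"
  unfolding net_outflow_def by (simp add: sum_subtractf)

lemma net_outflow_converse:
  "net_outflow (ES\<inverse>) (\<lambda>e. g (prod.swap e)) u = - net_outflow ES g u"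
proof -
  have "(\<Sum>e\<in>{e\<in>ES\<inverse>. h e = u}. g (prod.swap e)) = (\<Sum>e\<in>{e\<in>ES. h (prod.swap e) = u}. g e)"
    for h :: "'a \<times> 'a \<Rightarrow> 'a"
  proof -
    have "{e\<in>ES\<inverse>. h e = u} = prod.swap ` {e\<in>ES. h (prod.swap e) = u}" by force
    then show ?thesis by (simp add: sum.reindex)
  qed
  from this[of fst] this[of snd] show ?thesis
    unfolding net_outflow_def by simp
qed

lemma sum_list_zip_tl_telescope:
  "p \<noteq> [] \<Longrightarrow>
    (\<Sum>e\<leftarrow>zip p (tl p). (if fst e = u then c else 0) - (if snd e = u then c else 0))
      = (if hd p = u then c else 0) - (if last p = u then (c::real) else 0)"
proof (induction p)
  case Nil
  then show ?case by simp
next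
  case (Cons a p)
  then show ?case by (cases p) auto
qed

lemma net_outflow_path:
  assumes path: "is_path_edges F a b P" and "P \<subseteq> ES" "finite ES"
  shows "net_outflow ES (\<lambda>e. if e \<in> P then c else 0) u
           = (if u = a then c else 0) - (if u = b then (c::real) else 0)"
proof -
  obtain p where p: "p \<noteq> []" "distinct p" "hd p = a" "last p = b" "P = set (zip p (tl p))"
    using path unfolding is_path_edges_def by blast
  have restrict: "(\<Sum>e\<in>{e\<in>ES. h e = u}. if e \<in> P then c else 0) = (\<Sum>e\<in>P. if h e = u then c else 0)"
    for h :: "'a \<times> 'a \<Rightarrow> 'a"
  proof -
    have "(\<Sum>e\<in>{e\<in>ES. h e = u}. if e \<in> P then c else 0) = (\<Sum>e\<in>{e\<in>ES. h e = u} \<inter> P. c)"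
      using assms(3) by (intro sum.inter_restrict[symmetric]) simp
    also have "{e\<in>ES. h e = u} \<inter> P = {e\<in>P. h e = u}"
      using assms(2) by auto
    also have "(\<Sum>e\<in>{e\<in>P. h e = u}. c) = (\<Sum>e\<in>P. if h e = u then c else 0)"
      using is_path_edges_finite[OF path] by (intro sum.inter_filter)
    finally show ?thesis .
  qed
  have "net_outflow ES (\<lambda>e. if e \<in> P then c else 0) u
      = (\<Sum>e\<in>P. (if fst e = u then c else 0) - (if snd e = u then c else 0))"
    unfolding net_outflow_def restrict by (simp add: sum_subtractf)
  also have "\<dots> = (\<Sum>e\<leftarrow>zip p (tl p). (if fst e = u then c else 0) - (if snd e = u then c else 0))"
    unfolding p(5) using distinct_zipI1[OF p(2), of "tl p"] by (simp add: sum_list_distinct_conv_sum_set)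
  also have "\<dots> = (if u = a then c else 0) - (if u = b then c else 0)"
    using sum_list_zip_tl_telescope[OF p(1)] p(3,4) by auto
  finally show ?thesis .
qed

lemma sum_fibres_eq_sum_if_mem:
  fixes g :: "'a \<Rightarrow> 'b::comm_monoid_add"
  assumes "finite A" "finite R"
  shows "(\<Sum>w\<in>R. \<Sum>e\<in>{e\<in>A. h e = w}. g e) = (\<Sum>e\<in>A. if h e \<in> R then g e else 0)"
proof -
  have "(\<Sum>w\<in>R. \<Sum>e\<in>{e\<in>A. h e = w}. g e) = (\<Sum>w\<in>R. \<Sum>e\<in>A. if h e = w then g e else 0)"
    using assms(1) by (simp add: sum.inter_filter)
  also have "\<dots> = (\<Sum>e\<in>A. \<Sum>w\<in>R. if h e = w then g e else 0)"
    by (rule sum.swap)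
  also have "\<dots> = (\<Sum>e\<in>A. if h e \<in> R then g e else 0)"
    using assms(2) by (simp add: sum.delta)
  finally show ?thesis .
qed

text \<open>The set R of nodes reachable from u along edges of positive flow has no positive
  outflow, so its total net supply is at most 0; as u already contributes positive supply,
  R must contain a node of positive demand.\<close>
lemma flow_source_reaches_sink:
  fixes g :: "'v \<times> 'v \<Rightarrow> real"
  assumes fin: "finite VS" and ES: "ES \<subseteq> VS \<times> VS"
    and g_nonneg: "\<forall>e\<in>ES. 0 \<le> g e"
    and supply_nonneg: "\<forall>w\<in>VS. 0 \<le> b1 w" and demand_nonneg: "\<forall>w\<in>VS. 0 \<le> b2 w"
    and conservation: "\<forall>w\<in>VS. net_outflow ES g w = b1 w - b2 w"
    and u: "u \<in> VS" "0 < b1 u"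
  shows "\<exists>w\<in>VS. 0 < b2 w \<and> (u, w) \<in> {e\<in>ES. 0 < g e}\<^sup>*"
proof (rule ccontr)
  assume no_sink: "\<not> ?thesis"
  define R where "R = {w\<in>VS. (u, w) \<in> {e\<in>ES. 0 < g e}\<^sup>*}"
  have finES: "finite ES" using fin ES finite_subset by blast
  have finR: "finite R" using fin unfolding R_def by simp
  have uR: "u \<in> R" using u unfolding R_def by simp
  have no_demand: "\<forall>w\<in>R. b2 w = 0" using no_sink demand_nonneg unfolding R_def by force
  have closed: "snd e \<in> R" if "e \<in> ES" "fst e \<in> R" "0 < g e" for e
  proof -
    have "(u, snd e) \<in> {e\<in>ES. 0 < g e}\<^sup>*"
      using that unfolding R_def by (auto intro: rtrancl_into_rtrancl[of _ "fst e"])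
    then show ?thesis using that ES unfolding R_def by auto
  qed
  have "b1 u \<le> (\<Sum>w\<in>R. b1 w)"
    using finR uR supply_nonneg unfolding R_def by (intro member_le_sum) auto
  also have "\<dots> = (\<Sum>w\<in>R. net_outflow ES g w)"
    using conservation no_demand unfolding R_def by (intro sum.cong) auto
  also have "\<dots> = (\<Sum>e\<in>ES. (if fst e \<in> R then g e else 0) - (if snd e \<in> R then g e else 0))"
    unfolding net_outflow_def sum_subtractf sum_fibres_eq_sum_if_mem[OF finES finR] ..
  also have "\<dots> \<le> 0"
    using closed g_nonneg by (intro sum_nonpos) (fastforce simp: not_less)
  finally show False using u by simp
qed

lemma flow_sink_reached_from_source:
  fixes g :: "'v \<times> 'v \<Rightarrow> real"
  assumes fin: "finite VS" and ES: "ES \<subseteq> VS \<times> VS"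
    and g_nonneg: "\<forall>e\<in>ES. 0 \<le> g e"
    and supply_nonneg: "\<forall>w\<in>VS. 0 \<le> b1 w" and demand_nonneg: "\<forall>w\<in>VS. 0 \<le> b2 w"
    and conservation: "\<forall>w\<in>VS. net_outflow ES g w = b1 w - b2 w"
    and v: "v \<in> VS" "0 < b2 v"
  shows "\<exists>w\<in>VS. 0 < b1 w \<and> (w, v) \<in> {e\<in>ES. 0 < g e}\<^sup>*"
proof -
  have "\<exists>w\<in>VS. 0 < b1 w \<and> (v, w) \<in> {e\<in>ES\<inverse>. 0 < g (prod.swap e)}\<^sup>*"
    using ES g_nonneg conservation
    by (intro flow_source_reaches_sink[OF fin _ _ demand_nonneg supply_nonneg _ v])
       (auto simp: net_outflow_converse)
  moreover have "{e\<in>ES\<inverse>. 0 < g (prod.swap e)} = {e\<in>ES. 0 < g e}\<inverse>" by auto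
  ultimately show ?thesis by (simp add: rtrancl_converse)
qed

lemma undirected_tree_irrefl: "undirected_tree V E \<Longrightarrow> (i, i) \<notin> E"
  unfolding undirected_tree_def by blast

lemma rtrancl_leaves_set:
  "(a, b) \<in> R\<^sup>* \<Longrightarrow> a \<in> S \<Longrightarrow> b \<notin> S \<Longrightarrow> \<exists>p q. (p, q) \<in> R \<and> p \<in> S \<and> q \<notin> S"
proof (induction rule: rtrancl_induct)
  case base
  then show ?case by simp
next
  case (step y z)
  then show ?case by (cases "y \<in> S") auto
qed

definition connected_on :: "('n \<times> 'n) set \<Rightarrow> 'n set \<Rightarrow> bool" where
  "connected_on E S \<longleftrightarrow> (\<forall>a\<in>S. \<forall>b\<in>S. (a, b) \<in> ((E \<inter> S \<times> S) \<union> (E \<inter> S \<times> S)\<inverse>)\<^sup>*)"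

lemma connected_on_singleton: "connected_on E {r}"
  unfolding connected_on_def by simp

lemma connected_on_insert:
  assumes S: "connected_on E S" and p: "p \<in> S" and pq: "(p, q) \<in> E \<union> E\<inverse>"
  shows "connected_on E (insert q S)"
proof -
  let ?R = "(E \<inter> insert q S \<times> insert q S) \<union> (E \<inter> insert q S \<times> insert q S)\<inverse>"
  have sym: "sym (?R\<^sup>*)"
    by (intro sym_rtrancl sym_Un_converse)
  have "(E \<inter> S \<times> S) \<union> (E \<inter> S \<times> S)\<inverse> \<subseteq> ?R" by auto
  then have old: "(a, b) \<in> ?R\<^sup>*" if "a \<in> S" "b \<in> S" for a b
    using S that rtrancl_mono unfolding connected_on_def by blast
  have from_q: "(q, b) \<in> ?R\<^sup>*" if "b \<in> S" for b
  proof -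
    have "(q, p) \<in> ?R" using pq p by auto
    then show ?thesis using old[OF p that] by (rule converse_rtrancl_into_rtrancl)
  qed
  show ?thesis
    unfolding connected_on_def
  proof (intro ballI)
    fix a b assume "a \<in> insert q S" "b \<in> insert q S"
    then consider "a \<in> S" "b \<in> S" | "a = q" "b \<in> S" | "a \<in> S" "b = q" | "a = q" "b = q"
      by auto
    then show "(a, b) \<in> ?R\<^sup>*"
      by cases (use old from_q sym[THEN symD] in auto)
  qed
qed

text \<open>Otherwise deleting e would leave q connected to p through b, so e would not be a bridge.\<close>
lemma undirected_tree_unique_edge_to_outside:
  assumes tree: "undirected_tree V E" and S: "connected_on E S"
    and "q \<notin> S" "p \<in> S" "b \<in> S"
    and e: "e \<in> E" "e = (p, q) \<or> e = (q, p)"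
    and e': "e' \<in> E" "e' = (b, q) \<or> e' = (q, b)"
  shows "e' = e"
proof (rule ccontr)
  assume "e' \<noteq> e"
  define E0 where "E0 = E - {e}"
  have "(E \<inter> S \<times> S) \<union> (E \<inter> S \<times> S)\<inverse> \<subseteq> E0 \<union> E0\<inverse>"
    using e \<open>q \<notin> S\<close> unfolding E0_def by auto
  moreover have "(p, b) \<in> ((E \<inter> S \<times> S) \<union> (E \<inter> S \<times> S)\<inverse>)\<^sup>*"
    using S \<open>p \<in> S\<close> \<open>b \<in> S\<close> unfolding connected_on_def by blast
  ultimately have "(p, b) \<in> (E0 \<union> E0\<inverse>)\<^sup>*"
    using rtrancl_mono by blast
  moreover have "(b, q) \<in> E0 \<union> E0\<inverse>"
    using e' \<open>e' \<noteq> e\<close> unfolding E0_def by auto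
  ultimately have pq: "(p, q) \<in> (E0 \<union> E0\<inverse>)\<^sup>*"
    by (rule rtrancl_into_rtrancl)
  then have qp: "(q, p) \<in> (E0 \<union> E0\<inverse>)\<^sup>*"
    using sym_rtrancl[OF sym_Un_converse] by (rule symD[rotated])
  have bridge: "(i, j) \<notin> ((E - {(i, j)}) \<union> (E - {(i, j)})\<inverse>)\<^sup>*" if "(i, j) \<in> E" for i j
    using tree that unfolding undirected_tree_def by blast
  from e(2) show False
  proof
    assume "e = (p, q)"
    then show False using bridge[of p q] e(1) pq unfolding E0_def by simp
  next
    assume "e = (q, p)"
    then show False using bridge[of q p] e(1) qp unfolding E0_def by simp
  qed
qed

definition compatible_labelling ::
  "'n set \<Rightarrow> ('n \<times> 'n) set \<Rightarrow> ('n \<Rightarrow> 'v \<Rightarrow> bool) \<Rightarrow> ('n \<times> 'n \<Rightarrow> 'v \<Rightarrow> 'v \<Rightarrow> bool)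
   \<Rightarrow> ('n \<Rightarrow> 'v) \<Rightarrow> bool" where
  "compatible_labelling S E OK Q m \<longleftrightarrow>
     (\<forall>i\<in>S. OK i (m i)) \<and> (\<forall>(i, j)\<in>E \<inter> S \<times> S. Q (i, j) (m i) (m j))"

lemma undirected_tree_extend_labelling:
  assumes tree: "undirected_tree V E"
    and forward: "\<forall>(i, j)\<in>E. \<forall>u. OK i u \<longrightarrow> (\<exists>v. OK j v \<and> Q (i, j) u v)"
    and backward: "\<forall>(i, j)\<in>E. \<forall>v. OK j v \<longrightarrow> (\<exists>u. OK i u \<and> Q (i, j) u v)"
    and S: "connected_on E S" "S \<subseteq> V" "s \<in> S" "a \<in> V - S"
    and m: "compatible_labelling S E OK Q m"
  obtains q w where "q \<in> V - S" "connected_on E (insert q S)"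
    "compatible_labelling (insert q S) E OK Q (m(q := w))"
proof -
  have "(s, a) \<in> (E \<union> E\<inverse>)\<^sup>*"
    using tree S unfolding undirected_tree_def by blast
  then obtain p q where pq: "(p, q) \<in> E \<union> E\<inverse>" "p \<in> S" "q \<notin> S"
    using rtrancl_leaves_set[OF _ S(3), of a] S(4) by blast
  have qV: "q \<in> V" using pq tree unfolding undirected_tree_def by auto
  have ok_p: "OK p (m p)" using m pq(2) unfolding compatible_labelling_def by blast
  obtain e w where e: "e \<in> E" "e = (p, q) \<and> Q e (m p) w \<or> e = (q, p) \<and> Q e w (m p)"
    and w: "OK q w"
  proof (cases "(p, q) \<in> E")
    case True
    then obtain v where "OK q v" "Q (p, q) (m p) v" using forward ok_p by blast
    then show ?thesis using that True by blast
  next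
    case False
    then have "(q, p) \<in> E" using pq(1) by blast
    moreover obtain u where "OK q u" "Q (q, p) u (m p)" using backward ok_p calculation by blast
    ultimately show ?thesis using that by blast
  qed
  have e_pq: "e = (p, q) \<or> e = (q, p)" using e(2) by blast
  have unique: "e' = e" if "e' \<in> E" "e' = (b, q) \<or> e' = (q, b)" "b \<in> S" for e' b
    by (rule undirected_tree_unique_edge_to_outside[OF tree S(1) pq(3,2) that(3) e(1) e_pq that(1,2)])
  have "compatible_labelling (insert q S) E OK Q (m(q := w))"
    unfolding compatible_labelling_def
  proof (intro conjI ballI)
    fix i assume "i \<in> insert q S"
    then show "OK i ((m(q := w)) i)"
      using m w unfolding compatible_labelling_def by auto
  next
    fix ij assume ij: "ij \<in> E \<inter> insert q S \<times> insert q S"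
    then obtain i j where ij_def: "ij = (i, j)" "(i, j) \<in> E" "i \<in> insert q S" "j \<in> insert q S"
      by (cases ij) auto
    have "i \<noteq> j" using undirected_tree_irrefl[OF tree] ij_def(2) by auto
    then consider "i \<in> S" "j \<in> S" | "i = q" "j \<in> S" | "i \<in> S" "j = q"
      using ij_def(3,4) by auto
    then show "case ij of (i, j) \<Rightarrow> Q (i, j) ((m(q := w)) i) ((m(q := w)) j)"
    proof cases
      case 1
      then have "Q (i, j) (m i) (m j)"
        using ij_def(2) m unfolding compatible_labelling_def by blast
      then show ?thesis using 1 ij_def(1) pq(3) by auto
    next
      case 2
      then have "(i, j) = e" using unique[of "(i, j)" j] ij_def(2) by blast
      then show ?thesis using e 2 ij_def(1) pq(3) by auto
    next
      case 3
      then have "(i, j) = e" using unique[of "(i, j)" i] ij_def(2) by blast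
      then show ?thesis using e 3 ij_def(1) pq(3) by auto
    qed
  qed
  moreover have "q \<in> V - S" using qV pq(3) by blast
  ultimately show thesis
    using that connected_on_insert[OF S(1) pq(2,1)] by blast
qed

lemma undirected_tree_compatible_labelling:
  assumes tree: "undirected_tree V E"
    and ex: "\<forall>i\<in>V. \<exists>u. OK i u"
    and forward: "\<forall>(i, j)\<in>E. \<forall>u. OK i u \<longrightarrow> (\<exists>v. OK j v \<and> Q (i, j) u v)"
    and backward: "\<forall>(i, j)\<in>E. \<forall>v. OK j v \<longrightarrow> (\<exists>u. OK i u \<and> Q (i, j) u v)"
  shows "\<exists>m. (\<forall>i\<in>V. OK i (m i)) \<and> (\<forall>(i, j)\<in>E. Q (i, j) (m i) (m j))"
proof -
  have finV: "finite V" and EV: "E \<subseteq> V \<times> V" and "V \<noteq> {}"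
    using tree unfolding undirected_tree_def by auto
  have grow: "\<exists>m. compatible_labelling V E OK Q m"
    if "connected_on E S" "S \<subseteq> V" "s \<in> S" "compatible_labelling S E OK Q m" for S s m
    using that
  proof (induction "card (V - S)" arbitrary: S m)
    case 0
    then have "S = V" using finV by auto
    then show ?case using 0 by blast
  next
    case (Suc n)
    then obtain a where a: "a \<in> V - S" by (metis card.empty ex_in_conv nat.distinct(1))
    obtain q w where q: "q \<in> V - S" "connected_on E (insert q S)"
      "compatible_labelling (insert q S) E OK Q (m(q := w))"
      by (rule undirected_tree_extend_labelling[OF tree forward backward Suc.prems(1-3) a Suc.prems(4)])
    have "V - insert q S = (V - S) - {q}" by blast
    then have "n = card (V - insert q S)"
      using Suc.hyps(2) q(1) finV by simp
    moreover have "insert q S \<subseteq> V" "s \<in> insert q S" using q(1) Suc.prems(2,3) by auto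
    ultimately show ?case using Suc.hyps(1) q(2,3) by blast
  qed
  obtain r where r: "r \<in> V" using \<open>V \<noteq> {}\<close> by blast
  obtain u where "OK r u" using ex r by blast
  moreover have "E \<inter> {r} \<times> {r} = {}" using undirected_tree_irrefl[OF tree, of r] by blast
  ultimately have "compatible_labelling {r} E OK Q (\<lambda>_. u)"
    unfolding compatible_labelling_def by simp
  then obtain m where "compatible_labelling V E OK Q m"
    using grow[OF connected_on_singleton] r by blast
  moreover have "E \<inter> V \<times> V = E" using EV by blast
  ultimately show ?thesis
    unfolding compatible_labelling_def by auto
qed

lemma card_nonzero_diff_le:
  fixes g h :: "'a \<Rightarrow> 'b::ab_group_add"
  assumes "finite A" "\<forall>a\<in>A. g a = 0 \<longrightarrow> h a = 0"
  shows "card {a\<in>A. g a - h a \<noteq> 0} \<le> card {a\<in>A. g a \<noteq> 0}"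
  using assms by (intro card_mono) auto

lemma card_nonzero_diff_less:
  fixes g h :: "'a \<Rightarrow> 'b::ab_group_add"
  assumes "finite A" "\<forall>a\<in>A. g a = 0 \<longrightarrow> h a = 0" "b \<in> A" "g b \<noteq> 0" "h b = g b"
  shows "card {a\<in>A. g a - h a \<noteq> 0} < card {a\<in>A. g a \<noteq> 0}"
proof (rule psubset_card_mono)
  show "{a\<in>A. g a - h a \<noteq> 0} \<subset> {a\<in>A. g a \<noteq> 0}"
    using assms(2-5) by force
qed (use assms(1) in simp)

type_synonym ('n, 'v) embedding = "('n \<Rightarrow> 'v) \<times> ('n \<times> 'n \<Rightarrow> ('v \<times> 'v) set)"

locale tree_request =
  fixes VS :: "'v set" and ES :: "('v \<times> 'v) set"
    and Vr :: "'n set" and Er :: "('n \<times> 'n) set"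
    and Vallow :: "'n \<Rightarrow> 'v set" and Eallow :: "'n \<times> 'n \<Rightarrow> ('v \<times> 'v) set"
  assumes finite_VS: "finite VS" and ES_subset: "ES \<subseteq> VS \<times> VS"
    and tree: "undirected_tree Vr Er"
    and Vallow_subset: "\<forall>i\<in>Vr. Vallow i \<subseteq> VS"
    and Eallow_subset: "\<forall>ij\<in>Er. Eallow ij \<subseteq> ES"
begin

lemma finite_ES: "finite ES"
  using finite_VS ES_subset by (meson finite_SigmaI finite_subset)

lemma finite_Vr: "finite Vr" and Er_subset: "Er \<subseteq> Vr \<times> Vr" and Vr_nonempty: "Vr \<noteq> {}"
  using tree unfolding undirected_tree_def by auto

lemma finite_Er: "finite Er"
  using finite_Vr Er_subset by (meson finite_SigmaI finite_subset)

lemma valid_mapping_node_in_VS: "valid_mapping Vr Er Vallow Eallow m \<Longrightarrow> i \<in> Vr \<Longrightarrow> fst m i \<in> VS"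
  using Vallow_subset unfolding valid_mapping_def by blast

lemma valid_mapping_path_subset:
  "valid_mapping Vr Er Vallow Eallow m \<Longrightarrow> ij \<in> Er \<Longrightarrow> snd m ij \<subseteq> Eallow ij"
  unfolding valid_mapping_def by (cases ij) (blast dest: is_path_edges_subset)

definition flow_solution :: "real \<Rightarrow> ('n \<Rightarrow> 'v \<Rightarrow> real) \<Rightarrow> ('n \<times> 'n \<Rightarrow> 'v \<times> 'v \<Rightarrow> real) \<Rightarrow> bool" where
  "flow_solution x y z \<longleftrightarrow>
     (\<forall>i\<in>Vr. \<forall>u\<in>VS. 0 \<le> y i u) \<and> (\<forall>ij\<in>Er. \<forall>e\<in>ES. 0 \<le> z ij e) \<and>
     (\<forall>i\<in>Vr. (\<Sum>u\<in>Vallow i. y i u) = x) \<and> (\<forall>i\<in>Vr. \<forall>u\<in>VS - Vallow i. y i u = 0) \<and>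
     (\<forall>(i, j)\<in>Er. \<forall>u\<in>VS. net_outflow ES (z (i, j)) u = y i u - y j u) \<and>
     (\<forall>ij\<in>Er. \<forall>e\<in>ES - Eallow ij. z ij e = 0)"

definition dominated_decomposition ::
  "real \<Rightarrow> ('n \<Rightarrow> 'v \<Rightarrow> real) \<Rightarrow> ('n \<times> 'n \<Rightarrow> 'v \<times> 'v \<Rightarrow> real) \<Rightarrow> (real \<times> ('n, 'v) embedding) list
   \<Rightarrow> bool" where
  "dominated_decomposition x y z D \<longleftrightarrow>
     (\<forall>(f, m)\<in>set D. 0 < f \<and> valid_mapping Vr Er Vallow Eallow m) \<and> x = (\<Sum>(f, m)\<leftarrow>D. f) \<and>
     (\<forall>i\<in>Vr. \<forall>u\<in>VS. (\<Sum>(f, m)\<leftarrow>D. if fst m i = u then f else 0) \<le> y i u) \<and>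
     (\<forall>ij\<in>Er. \<forall>e\<in>ES. (\<Sum>(f, m)\<leftarrow>D. if e \<in> snd m ij then f else 0) \<le> z ij e)"

definition support_size :: "('n \<Rightarrow> 'v \<Rightarrow> real) \<Rightarrow> ('n \<times> 'n \<Rightarrow> 'v \<times> 'v \<Rightarrow> real) \<Rightarrow> nat" where
  "support_size y z = card {p\<in>Vr \<times> VS. case_prod y p \<noteq> 0} + card {p\<in>Er \<times> ES. case_prod z p \<noteq> 0}"

lemma flow_solutionD:
  assumes "flow_solution x y z"
  shows "\<forall>i\<in>Vr. \<forall>u\<in>VS. 0 \<le> y i u" "\<forall>ij\<in>Er. \<forall>e\<in>ES. 0 \<le> z ij e"
    "\<forall>i\<in>Vr. (\<Sum>u\<in>Vallow i. y i u) = x" "\<forall>i\<in>Vr. \<forall>u\<in>VS - Vallow i. y i u = 0"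
    "\<forall>(i, j)\<in>Er. \<forall>u\<in>VS. net_outflow ES (z (i, j)) u = y i u - y j u"
    "\<forall>ij\<in>Er. \<forall>e\<in>ES - Eallow ij. z ij e = 0"
  using assms unfolding flow_solution_def by blast+

lemma flow_solution_nonneg:
  assumes "flow_solution x y z"
  shows "0 \<le> x"
proof -
  obtain i where "i \<in> Vr" using Vr_nonempty by blast
  then show ?thesis
    using assms Vallow_subset unfolding flow_solution_def by (metis subsetD sum_nonneg)
qed

lemma flow_solution_edge:
  assumes "flow_solution x y z" "(i, j) \<in> Er"
  shows "\<forall>e\<in>ES. 0 \<le> z (i, j) e" "\<forall>w\<in>VS. 0 \<le> y i w" "\<forall>w\<in>VS. 0 \<le> y j w"
    "\<forall>w\<in>VS. net_outflow ES (z (i, j)) w = y i w - y j w"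
proof -
  have "i \<in> Vr" "j \<in> Vr" using assms(2) Er_subset by auto
  then show "\<forall>e\<in>ES. 0 \<le> z (i, j) e" "\<forall>w\<in>VS. 0 \<le> y i w" "\<forall>w\<in>VS. 0 \<le> y j w"
    using assms unfolding flow_solution_def by blast+
  show "\<forall>w\<in>VS. net_outflow ES (z (i, j)) w = y i w - y j w"
    using assms unfolding flow_solution_def by fast
qed

lemma flow_solution_forward:
  assumes sol: "flow_solution x y z" and ij: "(i, j) \<in> Er" and u: "u \<in> Vallow i" "0 < y i u"
  shows "\<exists>v\<in>Vallow j. 0 < y j v \<and> (u, v) \<in> {e\<in>ES. 0 < z (i, j) e}\<^sup>*"
proof -
  have "i \<in> Vr" "j \<in> Vr" using ij Er_subset by auto
  then have "u \<in> VS" using u Vallow_subset by blast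
  then obtain v where v: "v \<in> VS" "0 < y j v" "(u, v) \<in> {e\<in>ES. 0 < z (i, j) e}\<^sup>*"
    using flow_source_reaches_sink[OF finite_VS ES_subset flow_solution_edge[OF sol ij]] u(2)
    by blast
  moreover have "\<forall>w\<in>VS - Vallow j. y j w = 0"
    using sol \<open>j \<in> Vr\<close> unfolding flow_solution_def by blast
  then have "v \<in> Vallow j"
    using v(1,2) by force
  ultimately show ?thesis by blast
qed

lemma flow_solution_backward:
  assumes sol: "flow_solution x y z" and ij: "(i, j) \<in> Er" and v: "v \<in> Vallow j" "0 < y j v"
  shows "\<exists>u\<in>Vallow i. 0 < y i u \<and> (u, v) \<in> {e\<in>ES. 0 < z (i, j) e}\<^sup>*"
proof -
  have "i \<in> Vr" "j \<in> Vr" using ij Er_subset by auto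
  then have "v \<in> VS" using v Vallow_subset by blast
  then obtain u where u: "u \<in> VS" "0 < y i u" "(u, v) \<in> {e\<in>ES. 0 < z (i, j) e}\<^sup>*"
    using flow_sink_reached_from_source[OF finite_VS ES_subset flow_solution_edge[OF sol ij]] v(2)
    by blast
  moreover have "\<forall>w\<in>VS - Vallow i. y i w = 0"
    using sol \<open>i \<in> Vr\<close> unfolding flow_solution_def by blast
  then have "u \<in> Vallow i"
    using u(1,2) by force
  ultimately show ?thesis by blast
qed

lemma flow_solution_supporting_mapping:
  assumes sol: "flow_solution x y z" and "0 < x"
  obtains m where "valid_mapping Vr Er Vallow Eallow m" "\<forall>i\<in>Vr. 0 < y i (fst m i)"
    "\<forall>ij\<in>Er. \<forall>e\<in>snd m ij. 0 < z ij e"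
proof -
  define OK where "OK i u \<longleftrightarrow> u \<in> Vallow i \<and> 0 < y i u" for i u
  define Pos where "Pos ij = {e\<in>ES. 0 < z ij e}" for ij
  have "\<exists>u. OK i u" if "i \<in> Vr" for i
  proof (rule ccontr)
    assume "\<nexists>u. OK i u"
    then have "(\<Sum>u\<in>Vallow i. y i u) \<le> 0"
      unfolding OK_def by (intro sum_nonpos) (simp add: not_less)
    then show False using flow_solutionD(3)[OF sol] that \<open>0 < x\<close> by simp
  qed
  moreover have "\<forall>(i, j)\<in>Er. \<forall>u. OK i u \<longrightarrow> (\<exists>v. OK j v \<and> (u, v) \<in> (Pos (i, j))\<^sup>*)"
    using flow_solution_forward[OF sol] unfolding OK_def Pos_def by blast
  moreover have "\<forall>(i, j)\<in>Er. \<forall>v. OK j v \<longrightarrow> (\<exists>u. OK i u \<and> (u, v) \<in> (Pos (i, j))\<^sup>*)"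
    using flow_solution_backward[OF sol] unfolding OK_def Pos_def by blast
  ultimately obtain mV where mV: "\<forall>i\<in>Vr. OK i (mV i)" "\<forall>(i, j)\<in>Er. (mV i, mV j) \<in> (Pos (i, j))\<^sup>*"
    using undirected_tree_compatible_labelling[OF tree, of OK "\<lambda>ij u v. (u, v) \<in> (Pos ij)\<^sup>*"]
    by blast
  define mE where "mE ij = (SOME P. is_path_edges (Pos ij) (mV (fst ij)) (mV (snd ij)) P)" for ij
  have path: "is_path_edges (Pos ij) (mV (fst ij)) (mV (snd ij)) (mE ij)" if "ij \<in> Er" for ij
  proof -
    have "(mV (fst ij), mV (snd ij)) \<in> (Pos ij)\<^sup>*"
      using mV(2) that by (cases ij) auto
    then show ?thesis
      unfolding mE_def by (rule someI_ex[OF rtrancl_imp_is_path_edges])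
  qed
  have "Pos ij \<subseteq> Eallow ij" if "ij \<in> Er" for ij
    using flow_solutionD(6)[OF sol] that unfolding Pos_def by force
  then have "valid_mapping Vr Er Vallow Eallow (mV, mE)"
    unfolding valid_mapping_def using mV(1) path is_path_edges_mono unfolding OK_def by fastforce
  moreover have "\<forall>ij\<in>Er. \<forall>e\<in>mE ij. 0 < z ij e"
    using path is_path_edges_subset unfolding Pos_def by fastforce
  ultimately show thesis
    using that mV(1) unfolding OK_def by simp
qed

lemma flow_solution_subtract_mapping:
  assumes sol: "flow_solution x y z" and m: "valid_mapping Vr Er Vallow Eallow m"
    and f_le_y: "\<forall>i\<in>Vr. f \<le> y i (fst m i)" and f_le_z: "\<forall>ij\<in>Er. \<forall>e\<in>snd m ij. f \<le> z ij e"
  shows "flow_solution (x - f) (\<lambda>i u. y i u - (if fst m i = u then f else 0))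
           (\<lambda>ij e. z ij e - (if e \<in> snd m ij then f else 0))"
proof -
  note sol = flow_solutionD[OF sol]
  have node: "fst m i \<in> Vallow i" if "i \<in> Vr" for i
    using m that unfolding valid_mapping_def by blast
  have path: "is_path_edges (Eallow (i, j)) (fst m i) (fst m j) (snd m (i, j))" if "(i, j) \<in> Er" for i j
    using m that unfolding valid_mapping_def by blast
  have "(\<Sum>u\<in>Vallow i. y i u - (if fst m i = u then f else 0)) = x - f" if "i \<in> Vr" for i
  proof -
    have "finite (Vallow i)" using Vallow_subset that finite_VS finite_subset by blast
    then show ?thesis using sol(3) node that by (simp add: sum_subtractf)
  qed
  moreover have "net_outflow ES (\<lambda>e. z (i, j) e - (if e \<in> snd m (i, j) then f else 0)) u
      = (y i u - (if fst m i = u then f else 0)) - (y j u - (if fst m j = u then f else 0))"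
    if "(i, j) \<in> Er" "u \<in> VS" for i j u
  proof -
    have "snd m (i, j) \<subseteq> ES"
      using valid_mapping_path_subset[OF m that(1)] Eallow_subset that(1) by blast
    then show ?thesis
      using sol(5) that net_outflow_path[OF path[OF that(1)] _ finite_ES]
      by (auto simp: net_outflow_diff)
  qed
  moreover have "\<forall>ij\<in>Er. \<forall>e\<in>ES - Eallow ij. e \<notin> snd m ij"
    using valid_mapping_path_subset[OF m] by blast
  ultimately show ?thesis
    unfolding flow_solution_def using sol f_le_y f_le_z node by auto
qed

lemma mapping_bottleneck:
  fixes y :: "'n \<Rightarrow> 'v \<Rightarrow> real" and z :: "'n \<times> 'n \<Rightarrow> 'v \<times> 'v \<Rightarrow> real"
  assumes m: "valid_mapping Vr Er Vallow Eallow m"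
    and y_pos: "\<forall>i\<in>Vr. 0 < y i (fst m i)" and z_pos: "\<forall>ij\<in>Er. \<forall>e\<in>snd m ij. 0 < z ij e"
  obtains f where "0 < f" "\<forall>i\<in>Vr. f \<le> y i (fst m i)" "\<forall>ij\<in>Er. \<forall>e\<in>snd m ij. f \<le> z ij e"
    "(\<exists>i\<in>Vr. f = y i (fst m i)) \<or> (\<exists>ij\<in>Er. \<exists>e\<in>snd m ij. f = z ij e)"
proof -
  define W where "W = (\<lambda>i. y i (fst m i)) ` Vr \<union> (\<lambda>(ij, e). z ij e) ` (SIGMA ij:Er. snd m ij)"
  have "finite (SIGMA ij:Er. snd m ij)"
    using finite_Er valid_mapping_path_subset[OF m] Eallow_subset finite_ES
    by (meson finite_SigmaI finite_subset)
  then have "finite W" unfolding W_def using finite_Vr by blast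
  moreover have "W \<noteq> {}" unfolding W_def using Vr_nonempty by blast
  ultimately have "Min W \<in> W" "\<forall>w\<in>W. Min W \<le> w" by auto
  moreover have "\<forall>w\<in>W. 0 < w" unfolding W_def using y_pos z_pos by auto
  ultimately show thesis
    using that[of "Min W"] unfolding W_def by fastforce
qed

lemma support_size_subtract_mapping:
  assumes m: "valid_mapping Vr Er Vallow Eallow m"
    and y_pos: "\<forall>i\<in>Vr. 0 < y i (fst m i)" and z_pos: "\<forall>ij\<in>Er. \<forall>e\<in>snd m ij. 0 < z ij e"
    and tight: "(\<exists>i\<in>Vr. f = y i (fst m i)) \<or> (\<exists>ij\<in>Er. \<exists>e\<in>snd m ij. f = z ij e)"
  shows "support_size (\<lambda>i u. y i u - (if fst m i = u then f else 0))
           (\<lambda>ij e. z ij e - (if e \<in> snd m ij then f else 0)) < support_size y z"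
proof -
  define gy where "gy = (\<lambda>(i, u). y i u)"
  define hy where "hy = (\<lambda>(i, u). if fst m i = u then f else 0)"
  define gz where "gz = (\<lambda>(ij, e). z ij e)"
  define hz where "hz = (\<lambda>(ij, e). if e \<in> snd m ij then f else 0)"
  have finY: "finite (Vr \<times> VS)" and finZ: "finite (Er \<times> ES)"
    using finite_Vr finite_VS finite_Er finite_ES by auto
  have hy0: "\<forall>a\<in>Vr \<times> VS. gy a = 0 \<longrightarrow> hy a = 0"
    using y_pos unfolding gy_def hy_def by fastforce
  have hz0: "\<forall>a\<in>Er \<times> ES. gz a = 0 \<longrightarrow> hz a = 0"
    using z_pos unfolding gz_def hz_def by fastforce
  have "support_size (\<lambda>i u. y i u - (if fst m i = u then f else 0))
          (\<lambda>ij e. z ij e - (if e \<in> snd m ij then f else 0))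
      = card {a\<in>Vr \<times> VS. gy a - hy a \<noteq> 0} + card {a\<in>Er \<times> ES. gz a - hz a \<noteq> 0}"
    unfolding support_size_def gy_def hy_def gz_def hz_def by (simp add: case_prod_beta)
  moreover have "support_size y z = card {a\<in>Vr \<times> VS. gy a \<noteq> 0} + card {a\<in>Er \<times> ES. gz a \<noteq> 0}"
    unfolding support_size_def gy_def gz_def ..
  moreover have "card {a\<in>Vr \<times> VS. gy a - hy a \<noteq> 0} + card {a\<in>Er \<times> ES. gz a - hz a \<noteq> 0}
      < card {a\<in>Vr \<times> VS. gy a \<noteq> 0} + card {a\<in>Er \<times> ES. gz a \<noteq> 0}"
    using tight
  proof
    assume "\<exists>i\<in>Vr. f = y i (fst m i)"
    then obtain i where i: "i \<in> Vr" "f = y i (fst m i)" by blast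
    have "card {a\<in>Vr \<times> VS. gy a - hy a \<noteq> 0} < card {a\<in>Vr \<times> VS. gy a \<noteq> 0}"
      using i y_pos[rule_format, OF i(1)] valid_mapping_node_in_VS[OF m i(1)]
      by (intro card_nonzero_diff_less[OF finY hy0, of "(i, fst m i)"]) (auto simp: gy_def hy_def)
    then show ?thesis using card_nonzero_diff_le[OF finZ hz0] by linarith
  next
    assume "\<exists>ij\<in>Er. \<exists>e\<in>snd m ij. f = z ij e"
    then obtain ij e where e: "ij \<in> Er" "e \<in> snd m ij" "f = z ij e" by blast
    have "e \<in> ES" using valid_mapping_path_subset[OF m e(1)] Eallow_subset e by blast
    then have "card {a\<in>Er \<times> ES. gz a - hz a \<noteq> 0} < card {a\<in>Er \<times> ES. gz a \<noteq> 0}"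
      using e z_pos[rule_format, OF e(1,2)]
      by (intro card_nonzero_diff_less[OF finZ hz0, of "(ij, e)"]) (auto simp: gz_def hz_def)
    then show ?thesis using card_nonzero_diff_le[OF finY hy0] by linarith
  qed
  ultimately show ?thesis by simp
qed

lemma dominated_decomposition_Cons:
  assumes "dominated_decomposition (x - f) (\<lambda>i u. y i u - (if fst m i = u then f else 0))
             (\<lambda>ij e. z ij e - (if e \<in> snd m ij then f else 0)) D"
    and "0 < f" and "valid_mapping Vr Er Vallow Eallow m"
  shows "dominated_decomposition x y z ((f, m) # D)"
  using assms unfolding dominated_decomposition_def by (auto simp: algebra_simps)

theorem flow_solution_decomposition:
  assumes "flow_solution x y z"
  shows "\<exists>D. dominated_decomposition x y z D"
  using assms
proof (induction "support_size y z" arbitrary: x y z rule: less_induct)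
  case less
  show ?case
  proof (cases "x = 0")
    case True
    then have "dominated_decomposition x y z []"
      using flow_solutionD(1,2)[OF less.prems] unfolding dominated_decomposition_def by simp
    then show ?thesis by blast
  next
    case False
    then have "0 < x" using flow_solution_nonneg[OF less.prems] by simp
    then obtain m where m: "valid_mapping Vr Er Vallow Eallow m" "\<forall>i\<in>Vr. 0 < y i (fst m i)"
      "\<forall>ij\<in>Er. \<forall>e\<in>snd m ij. 0 < z ij e"
      using flow_solution_supporting_mapping[OF less.prems] by blast
    then obtain f where f: "0 < f" "\<forall>i\<in>Vr. f \<le> y i (fst m i)" "\<forall>ij\<in>Er. \<forall>e\<in>snd m ij. f \<le> z ij e"
      "(\<exists>i\<in>Vr. f = y i (fst m i)) \<or> (\<exists>ij\<in>Er. \<exists>e\<in>snd m ij. f = z ij e)"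
      by (rule mapping_bottleneck)
    obtain D where "dominated_decomposition (x - f) (\<lambda>i u. y i u - (if fst m i = u then f else 0))
        (\<lambda>ij e. z ij e - (if e \<in> snd m ij then f else 0)) D"
      using less.hyps[OF support_size_subtract_mapping[of m y z f, OF m f(4)]
          flow_solution_subtract_mapping[of x y z m f, OF less.prems m(1) f(2,3)]] by blast
    then show ?thesis using dominated_decomposition_Cons f(1) m(1) by blast
  qed
qed

end

lemma sum_list_weighted_sum_swap:
  fixes c :: "'a \<Rightarrow> real" and D :: "(real \<times> 'm) list"
  shows "(\<Sum>(f, m)\<leftarrow>D. f * (\<Sum>i\<in>A. if P m i then c i else 0))
       = (\<Sum>i\<in>A. c i * (\<Sum>(f, m)\<leftarrow>D. if P m i then f else 0))"
  by (induction D) (auto simp: sum_distrib_left distrib_left sum.distrib mult.commute intro!: sum.cong)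

lemma weighted_alloc_node_le:
  assumes "finite Vr" "\<forall>i\<in>Vr. 0 \<le> dV i"
    and "\<forall>i\<in>Vr. (\<Sum>(f, m)\<leftarrow>D. if fst m i = u then f else 0) \<le> y i u"
  shows "(\<Sum>(f, m)\<leftarrow>D. f * alloc_node Vr tr dV m t u) \<le> (\<Sum>i\<in>{i\<in>Vr. tr i = t}. dV i * y i u)"
proof -
  have "alloc_node Vr tr dV m t u = (\<Sum>i\<in>{i\<in>Vr. tr i = t}. if fst m i = u then dV i else 0)" for m
    unfolding alloc_node_def using assms(1) by (simp add: sum.inter_filter[symmetric] conj_assoc)
  then have "(\<Sum>(f, m)\<leftarrow>D. f * alloc_node Vr tr dV m t u)
      = (\<Sum>i\<in>{i\<in>Vr. tr i = t}. dV i * (\<Sum>(f, m)\<leftarrow>D. if fst m i = u then f else 0))"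
    by (simp add: sum_list_weighted_sum_swap)
  also have "\<dots> \<le> (\<Sum>i\<in>{i\<in>Vr. tr i = t}. dV i * y i u)"
    using assms(2,3) by (intro sum_mono mult_left_mono) auto
  finally show ?thesis .
qed

lemma weighted_alloc_edge_le:
  assumes "finite Er" "\<forall>ij\<in>Er. 0 \<le> dE ij"
    and "\<forall>ij\<in>Er. (\<Sum>(f, m)\<leftarrow>D. if e \<in> snd m ij then f else 0) \<le> z ij e"
  shows "(\<Sum>(f, m)\<leftarrow>D. f * alloc_edge Er dE m e) \<le> (\<Sum>ij\<in>Er. dE ij * z ij e)"
proof -
  have "alloc_edge Er dE m e = (\<Sum>ij\<in>Er. if e \<in> snd m ij then dE ij else 0)" for m
    unfolding alloc_edge_def using assms(1) by (simp add: sum.inter_filter)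
  then have "(\<Sum>(f, m)\<leftarrow>D. f * alloc_edge Er dE m e)
      = (\<Sum>ij\<in>Er. dE ij * (\<Sum>(f, m)\<leftarrow>D. if e \<in> snd m ij then f else 0))"
    by (simp add: sum_list_weighted_sum_swap)
  also have "\<dots> \<le> (\<Sum>ij\<in>Er. dE ij * z ij e)"
    using assms(2,3) by (intro sum_mono mult_left_mono) auto
  finally show ?thesis .
qed

theorem lemma6:
  fixes VS :: "'v set" and ES :: "('v \<times> 'v) set"
    and T :: "'t set" and VSt :: "'t \<Rightarrow> 'v set"
    and Vr :: "'n set" and Er :: "('n \<times> 'n) set" and tr :: "'n \<Rightarrow> 't"
    and dV :: "'n \<Rightarrow> real" and dE :: "'n \<times> 'n \<Rightarrow> real"
    and Vallow :: "'n \<Rightarrow> 'v set" and Eallow :: "'n \<times> 'n \<Rightarrow> ('v \<times> 'v) set"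
    and x :: real and y :: "'n \<Rightarrow> 'v \<Rightarrow> real" and z :: "'n \<times> 'n \<Rightarrow> 'v \<times> 'v \<Rightarrow> real"
    and aN :: "'t \<Rightarrow> 'v \<Rightarrow> real" and aE :: "'v \<times> 'v \<Rightarrow> real"
  assumes substrate: "finite VS" "ES \<subseteq> VS \<times> VS" "finite T" "\<forall>t\<in>T. VSt t \<subseteq> VS"
    and request: "finite Vr" "Er \<subseteq> Vr \<times> Vr" "\<forall>i\<in>Vr. tr i \<in> T"
      "\<forall>i\<in>Vr. 0 \<le> dV i" "\<forall>ij\<in>Er. 0 \<le> dE ij"
      "\<forall>i\<in>Vr. Vallow i \<subseteq> VSt (tr i)" "\<forall>ij\<in>Er. Eallow ij \<subseteq> ES"
    and tree: "undirected_tree Vr Er"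
    and feasible: "mcf_lp_feasible VS ES T VSt Vr Er tr dV dE Vallow Eallow x y z aN aE"
  shows "\<exists>D :: (real \<times> (('n \<Rightarrow> 'v) \<times> ('n \<times> 'n \<Rightarrow> ('v \<times> 'v) set))) list.
           (\<forall>(f, m)\<in>set D. f > 0 \<and> valid_mapping Vr Er Vallow Eallow m) \<and>
           x = (\<Sum>(f, m)\<leftarrow>D. f) \<and>
           (\<forall>t\<in>T. \<forall>u\<in>VSt t. aN t u \<ge> (\<Sum>(f, m)\<leftarrow>D. f * alloc_node Vr tr dV m t u)) \<and>
           (\<forall>e\<in>ES. aE e \<ge> (\<Sum>(f, m)\<leftarrow>D. f * alloc_edge Er dE m e))"
proof -
  interpret tree_request VS ES Vr Er Vallow Eallow
    using substrate request tree by unfold_locales blast+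
  have "flow_solution x y z"
    using feasible unfolding mcf_lp_feasible_def flow_solution_def net_outflow_def by blast
  then obtain D where D: "dominated_decomposition x y z D"
    using flow_solution_decomposition by blast
  have aN: "\<forall>t\<in>T. \<forall>u\<in>VSt t. aN t u = (\<Sum>i\<in>{i\<in>Vr. tr i = t}. dV i * y i u)"
    and aE: "\<forall>e\<in>ES. aE e = (\<Sum>ij\<in>Er. dE ij * z ij e)"
    using feasible unfolding mcf_lp_feasible_def by blast+
  have "(\<Sum>(f, m)\<leftarrow>D. f * alloc_node Vr tr dV m t u) \<le> aN t u" if "t \<in> T" "u \<in> VSt t" for t u
  proof -
    have "u \<in> VS" using substrate(4) that by blast
    then show ?thesis
      using weighted_alloc_node_le[OF request(1,4), where D = D and u = u and y = y and tr = tr and t = t] D aN that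
      unfolding dominated_decomposition_def by simp
  qed
  moreover have "(\<Sum>(f, m)\<leftarrow>D. f * alloc_edge Er dE m e) \<le> aE e" if "e \<in> ES" for e
    using weighted_alloc_edge_le[OF finite_Er request(5), where D = D and e = e and z = z] D aE that
    unfolding dominated_decomposition_def by simp
  ultimately show ?thesis
    using D unfolding dominated_decomposition_def by blast
qed

end
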